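(* Let $Q\in(0,1/2)$, $\sigma>0$ and $\beta\in(0,1)$, and define $\pi^B(\beta)=\frac{(1-2Q)\sigma}{1+\sigma}+2Q\beta$, $\Delta_O^B(\beta)=\frac{\beta Q(\sigma+1)-2Q\sigma+\sigma}{2\beta Q(\sigma+1)-2Q\sigma+\sigma}-\frac{(1-2Q)\sigma}{1+\sigma}-Q$, $V(\beta)=\pi^B(\beta)\Delta_O^B(\beta)=(1-2Q)\frac{\sigma+Q\left(\beta-\sigma+\sigma^2(1-\beta)\right)}{(\sigma+1)^2}$. Then (i) $\pi^B$ is strictly increasing and $\Delta_O^B$ is strictly decreasing in $\beta$; (ii) $\frac{\partial^2V}{\partial\beta\,\partial\sigma}<0$, and $V'(\beta)>0$ if $\sigma<1$, $V'(\beta)=0$ if $\sigma=1$, $V'(\beta)<0$ if $\sigma>1$.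
   Context: Interpretation (not needed for the claim): in a model with a symmetric type distribution $F$ on $[-1/2,1/2]$, recommendation threshold $R$, $\beta=F(1/2-R)$, prior probabilities $q_H,q_1,q_2,q_L$ of product versions $(1,1),(1,0),(0,1),(0,0)$, $Q=(q_1+q_2)/2$ and $\sigma=q_H/q_L$, the quantities $\pi^B$, $\Delta_O^B$ and $V$ are the probability of a buy recommendation, the objective effect of a buy recommendation, and the value of the recommendation system. *)

theory Defs
  imports "HOL-Analysis.Analysis"
begin

definition piB :: "real \<Rightarrow> real \<Rightarrow> real \<Rightarrow> real" where
  "piB Q \<sigma> \<beta> = (1 - 2*Q) * \<sigma> / (1 + \<sigma>) + 2 * Q * \<beta>"

definition DeltaOB :: "real \<Rightarrow> real \<Rightarrow> real \<Rightarrow> real" where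
  "DeltaOB Q \<sigma> \<beta> =
     (\<beta> * Q * (\<sigma> + 1) - 2 * Q * \<sigma> + \<sigma>) / (2 * \<beta> * Q * (\<sigma> + 1) - 2 * Q * \<sigma> + \<sigma>)
     - (1 - 2*Q) * \<sigma> / (1 + \<sigma>) - Q"

definition Vval :: "real \<Rightarrow> real \<Rightarrow> real \<Rightarrow> real" where
  "Vval Q \<sigma> \<beta> = piB Q \<sigma> \<beta> * DeltaOB Q \<sigma> \<beta>"

end

theory Submission
  imports Defs
begin

text \<open>Once the denominators are cleared, \<open>V\<close> is affine in \<open>\<beta>\<close> with slope
\<open>(1 - 2Q) Q (1 - \<sigma>) / (1 + \<sigma>)\<close>, which has the sign of \<open>1 - \<sigma>\<close> and is strictly
decreasing in \<open>\<sigma>\<close>. Up to an additive constant, \<open>\<Delta>\<^sub>O\<^sup>B\<close> is \<open>(a\<beta> + c) / (2a\<beta> + c)\<close> with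
\<open>a = Q(\<sigma> + 1) > 0\<close> and \<open>c = \<sigma>(1 - 2Q) > 0\<close>, which decreases because the denominator grows
twice as fast as the numerator.\<close>

lemma Vval_eq_closed_form:
  fixes Q s b :: real
  assumes "s + 1 \<noteq> 0" "2 * b * Q * (s + 1) - 2 * Q * s + s \<noteq> 0"
  shows "Vval Q s b = (1 - 2*Q) * (s + Q * (b - s + s^2 * (1 - b))) / (s + 1)^2"
proof -
  define t where "t = s + 1"
  define D where "D = 2 * b * Q * (s + 1) - 2 * Q * s + s"
  define N where "N = b * Q * (s + 1) - 2 * Q * s + s"
  have t: "t \<noteq> 0" and D: "D \<noteq> 0" using assms by (simp_all add: t_def D_def)
  have piB: "piB Q s b = D / t"
    using t unfolding piB_def D_def t_def by (simp add: field_simps)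
  have DeltaOB: "DeltaOB Q s b = N / D - ((1 - 2*Q) * s + Q * t) / t"
    using t unfolding DeltaOB_def D_def N_def t_def by (simp add: field_simps)
  have "Vval Q s b = (N * t - D * ((1 - 2*Q) * s + Q * t)) / t^2"
    unfolding Vval_def piB DeltaOB using t D by (simp add: field_simps power2_eq_square)
  also have "N * t - D * ((1 - 2*Q) * s + Q * t) = (1 - 2*Q) * (s + Q * (b - s + s^2 * (1 - b)))"
    unfolding N_def D_def t_def by (simp add: algebra_simps power2_eq_square)
  finally show ?thesis unfolding t_def .
qed

lemma DeltaOB_denominator_pos:
  fixes Q s b :: real
  assumes "0 \<le> Q" "Q < 1/2" "0 < s" "0 \<le> b"
  shows "0 < 2 * b * Q * (s + 1) - 2 * Q * s + s"
proof -
  have "0 < s * (1 - 2*Q)" using assms by simp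
  moreover have "0 \<le> 2 * b * Q * (s + 1)" using assms by simp
  ultimately show ?thesis by (simp add: algebra_simps)
qed

lemma has_field_derivative_Vval:
  fixes Q s b :: real
  assumes "0 \<le> Q" "Q < 1/2" "0 < s" "0 < b"
  shows "(Vval Q s has_field_derivative (1 - 2*Q) * Q * (1 - s) / (1 + s)) (at b)"
proof -
  let ?V = "\<lambda>b. (1 - 2*Q) * (s + Q * (b - s + s^2 * (1 - b))) / (s + 1)^2"
  have "1 + s \<noteq> 0" "s + 1 \<noteq> 0" using assms by auto
  then have V_deriv: "(?V has_field_derivative (1 - 2*Q) * Q * (1 - s) / (1 + s)) (at b)"
    by (auto intro!: derivative_eq_intros simp: divide_simps power2_eq_square) (simp add: algebra_simps)
  have V_eq: "?V x = Vval Q s x" if "x \<in> {0<..}" for x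
    using assms that DeltaOB_denominator_pos[of Q s x] by (simp add: Vval_eq_closed_form)
  show ?thesis
    by (rule has_field_derivative_transform_within_open[OF V_deriv open_greaterThan _ V_eq])
      (use assms in simp)
qed

lemma deriv_Vval:
  fixes Q s b :: real
  assumes "0 \<le> Q" "Q < 1/2" "0 < s" "0 < b"
  shows "deriv (Vval Q s) b = (1 - 2*Q) * Q * (1 - s) / (1 + s)"
  using has_field_derivative_Vval[OF assms] by (rule DERIV_imp_deriv)

lemma sgn_deriv_Vval:
  fixes Q s b :: real
  assumes "0 < Q" "Q < 1/2" "0 < s" "0 < b"
  shows "sgn (deriv (Vval Q s) b) = sgn (1 - s)"
proof -
  have "0 < (1 - 2*Q) * Q" "0 < 1 + s" using assms by simp_all
  then show ?thesis
    using assms by (simp add: deriv_Vval sgn_mult sgn_divide)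
qed

lemma deriv_deriv_Vval_mixed:
  fixes Q \<sigma> \<beta> :: real
  assumes "0 \<le> Q" "Q < 1/2" "0 < \<sigma>" "0 < \<beta>"
  shows "deriv (\<lambda>s. deriv (\<lambda>b. Vval Q s b) \<beta>) \<sigma> = - (2 * (1 - 2*Q) * Q / (1 + \<sigma>)^2)"
proof -
  let ?V' = "\<lambda>s. (1 - 2*Q) * Q * (1 - s) / (1 + s)"
  have "1 + \<sigma> \<noteq> 0" using assms by simp
  then have V'_deriv: "(?V' has_field_derivative - (2 * (1 - 2*Q) * Q / (1 + \<sigma>)^2)) (at \<sigma>)"
    by (auto intro!: derivative_eq_intros simp: divide_simps power2_eq_square) (simp add: algebra_simps)
  have V'_eq: "?V' s = deriv (\<lambda>b. Vval Q s b) \<beta>" if "s \<in> {0<..}" for s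
    using assms that by (simp add: deriv_Vval)
  have "((\<lambda>s. deriv (\<lambda>b. Vval Q s b) \<beta>) has_field_derivative - (2 * (1 - 2*Q) * Q / (1 + \<sigma>)^2)) (at \<sigma>)"
    by (rule has_field_derivative_transform_within_open[OF V'_deriv open_greaterThan _ V'_eq])
      (use assms in simp)
  then show ?thesis by (rule DERIV_imp_deriv)
qed

lemma affine_ratio_strict_antimono:
  fixes a c :: real
  assumes "0 < a" "0 < c"
  shows "strict_antimono_on {0..} (\<lambda>x. (a*x + c) / (2*a*x + c))"
proof (rule monotone_onI)
  fix x y :: real
  assume "x \<in> {0..}" "y \<in> {0..}" "x < y"
  with assms have "(a*y + c) * (2*a*x + c) < (a*x + c) * (2*a*y + c)"
    and "0 < 2*a*x + c" "0 < 2*a*y + c"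
    by (simp_all add: algebra_simps add_pos_nonneg)
  then show "(a*x + c) / (2*a*x + c) > (a*y + c) / (2*a*y + c)"
    by (simp add: divide_simps)
qed

lemma DeltaOB_strict_antimono:
  fixes Q s :: real
  assumes "0 < Q" "Q < 1/2" "0 < s"
  shows "strict_antimono_on {0..} (DeltaOB Q s)"
proof -
  define a where "a = Q * (s + 1)"
  define c where "c = s * (1 - 2*Q)"
  have "0 < a" "0 < c" using assms by (simp_all add: a_def c_def)
  then have "strict_antimono_on {0..} (\<lambda>x. (a*x + c) / (2*a*x + c))"
    by (rule affine_ratio_strict_antimono)
  moreover have "DeltaOB Q s x = (a*x + c) / (2*a*x + c) - ((1 - 2*Q) * s / (1 + s) + Q)" for x
    unfolding DeltaOB_def a_def c_def by (simp add: algebra_simps)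
  ultimately show ?thesis
    unfolding monotone_on_def by auto
qed

theorem lemma2:
  fixes Q \<sigma> \<beta> :: real
  assumes "0 < Q" "Q < 1/2" "0 < \<sigma>" "0 < \<beta>" "\<beta> < 1"
  shows "Vval Q \<sigma> \<beta> = (1 - 2*Q) * (\<sigma> + Q * (\<beta> - \<sigma> + \<sigma>^2 * (1 - \<beta>))) / (\<sigma> + 1)^2
    \<and> strict_mono_on {0<..<1} (piB Q \<sigma>)
    \<and> strict_antimono_on {0<..<1} (DeltaOB Q \<sigma>)
    \<and> deriv (\<lambda>s. deriv (\<lambda>b. Vval Q s b) \<beta>) \<sigma> < 0
    \<and> (\<sigma> < 1 \<longrightarrow> deriv (Vval Q \<sigma>) \<beta> > 0)
    \<and> (\<sigma> = 1 \<longrightarrow> deriv (Vval Q \<sigma>) \<beta> = 0)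
    \<and> (\<sigma> > 1 \<longrightarrow> deriv (Vval Q \<sigma>) \<beta> < 0)"
proof -
  have "0 < 2 * (1 - 2*Q) * Q" using assms by simp
  then have "deriv (\<lambda>s. deriv (\<lambda>b. Vval Q s b) \<beta>) \<sigma> < 0"
    using deriv_deriv_Vval_mixed[of Q \<sigma> \<beta>] assms by simp
  moreover have "Vval Q \<sigma> \<beta> = (1 - 2*Q) * (\<sigma> + Q * (\<beta> - \<sigma> + \<sigma>^2 * (1 - \<beta>))) / (\<sigma> + 1)^2"
    using assms DeltaOB_denominator_pos[of Q \<sigma> \<beta>] by (intro Vval_eq_closed_form) auto
  moreover have "strict_mono_on {0<..<1} (piB Q \<sigma>)"
    using assms unfolding strict_mono_on_def piB_def by auto
  moreover have "strict_antimono_on {0<..<1} (DeltaOB Q \<sigma>)"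
    by (rule monotone_on_subset[OF DeltaOB_strict_antimono[OF assms(1-3)]]) auto
  moreover have "sgn (deriv (Vval Q \<sigma>) \<beta>) = sgn (1 - \<sigma>)"
    using assms by (intro sgn_deriv_Vval) auto
  ultimately show ?thesis
    by (simp add: sgn_if split: if_splits)
qed

end
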